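(* Let $m\ge 2$ and $N\ge 2$ be integers and let $\mathbf X=(x_{il})_{N\times m}$ be a design whose rows lie in $S_b=\{\mathbf x\in\mathbb R^m:\ \sum_{l=1}^m x_l=1,\ 0\le x_l\le 1,\ l=1,\dots,m\}$. For $\boldsymbol\theta=(\theta_1,\dots,\theta_m)'$ and $p>0$ define $$f(\mathbf X\mid\boldsymbol\theta)=\sum_{i=1}^{N-1}\sum_{j=i+1}^{N}\left(\frac{1}{\sum_{l=1}^m\theta_l(x_{il}-x_{jl})^2}\right)^{p/2}.$$ Take $p=2m$ and let $\boldsymbol\theta$ follow the uniform distribution on the region $H=\{\boldsymbol\theta:\ 0\le\theta_l\le1,\ \sum_{l=1}^m\theta_l=1\}$. Then there is a constant $C$ (not depending on $\mathbf X$) such that $$E_{\boldsymbol\theta}\big(f(\mathbf X\mid\boldsymbol\theta)\big)=\int_H f(\mathbf X\mid\boldsymbol\theta)\,dp(\boldsymbol\theta)=C\sum_{i=1}^{N-1}\sum_{j=i+1}^{N}\frac{1}{\prod_{l=1}^m (x_{il}-x_{jl})^{2}}.$$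
   Context: The uniform distribution on $H$ is the normalized $(m-1)$-dimensional surface (Lebesgue) measure on the simplex $H$. Both sides are understood as values in $[0,\infty]$ (a term with some $x_{il}=x_{jl}$ is $+\infty$). *)

theory Defs
  imports "HOL-Analysis.Analysis"
begin

text \<open>Vectors in R^m are functions nat => real indexed by 0..m-1;
 a design X is nat => nat => real with rows 0..N-1 and columns 0..m-1.\<close>

definition S_b :: "nat \<Rightarrow> (nat \<Rightarrow> real) set" where
  "S_b m = {x. (\<Sum>l<m. x l) = 1 \<and> (\<forall>l<m. 0 \<le> x l \<and> x l \<le> 1)}"

definition f_crit :: "nat \<Rightarrow> nat \<Rightarrow> real \<Rightarrow> (nat \<Rightarrow> nat \<Rightarrow> real) \<Rightarrow> (nat \<Rightarrow> real) \<Rightarrow> ennreal" where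
  "f_crit m N p X \<theta> =
     (\<Sum>i<N. \<Sum>j\<in>{i+1..<N}.
        (let D = (\<Sum>l<m. \<theta> l * (X i l - X j l)^2)
         in if D = 0 then (\<infinity>::ennreal) else ennreal ((1 / D) powr (p / 2))))"

text \<open>Parametrisation of the simplex H by its first m-1 coordinates.\<close>
definition H_param :: "nat \<Rightarrow> (nat \<Rightarrow> real) set" where
  "H_param m = {t \<in> {..<m-1} \<rightarrow>\<^sub>E UNIV. (\<forall>l<m-1. 0 \<le> t l) \<and> (\<Sum>l<m-1. t l) \<le> 1}"

definition theta_of :: "nat \<Rightarrow> (nat \<Rightarrow> real) \<Rightarrow> (nat \<Rightarrow> real)" where
  "theta_of m t = (\<lambda>l. if l < m - 1 then t l else if l = m - 1 then 1 - (\<Sum>k<m-1. t k) else undefined)"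

text \<open>Uniform distribution on H (normalised (m-1)-dimensional surface measure):
 the affine chart t |-> theta_of m t has constant Jacobian, so this is the image of
 the uniform (normalised Lebesgue) distribution on the chart domain.\<close>
definition H_uniform :: "nat \<Rightarrow> (nat \<Rightarrow> real) measure" where
  "H_uniform m = distr (uniform_measure (PiM {..<m-1} (\<lambda>_. lborel)) (H_param m))
                       (PiM {..<m} (\<lambda>_. lborel)) (theta_of m)"

end

theory Submission
  imports Defs
begin

(* For m = n + 1 and theta = theta_of m t, the (i, j) term of f_crit with p = 2m is
   D(t)^(-(n+1)), where D(t) = a_n (1 - sum_l t_l) + sum_l t_l a_l is affine in t and
   a_l = (x_il - x_jl)^2. The Feynman parametrisation
     integral over the corner simplex of D^(-(n+1)) = 1 / (n! a_0 ... a_n)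
   is proved by induction on n: slicing off t_k = y and rescaling the other coordinates by
   1 - y leaves the one-dimensional integral
     int_0^1 (1-y)^k ((1-y) A + y B)^(-(k+2)) dy = 1 / ((k+1) B A^(k+1)).
   Since the simplex has volume 1/n!, the factor n! cancels and C = 1. If some a_l vanishes,
   both sides are infinite: the left side dominates the formula for a_l + e, which blows up
   as e tends to 0. *)

abbreviation lborel_pi :: "nat \<Rightarrow> (nat \<Rightarrow> real) measure" where
  "lborel_pi n \<equiv> PiM {..<n} (\<lambda>_. lborel)"

lemma nn_integral_PiM_lborel_scale:
  fixes c :: real and I :: "'i set"
  assumes "finite I" "c > 0" and "f \<in> borel_measurable (PiM I (\<lambda>_. lborel))"
  shows "(\<integral>\<^sup>+x. f x \<partial>PiM I (\<lambda>_. lborel)) =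
    ennreal (c ^ card I) * (\<integral>\<^sup>+x. f (\<lambda>i\<in>I. c * x i) \<partial>PiM I (\<lambda>_. lborel))"
  using assms(1,3)
proof (induction I arbitrary: f rule: finite_induct)
  case empty
  show ?case
    by (auto simp: PiM_empty nn_integral_count_space_finite)
next
  case (insert i I f)
  interpret product_sigma_finite "\<lambda>_. lborel::real measure" by standard
  note [measurable] = insert.prems
  define h where "h x = (\<integral>\<^sup>+y. f (x(i := c * y)) \<partial>lborel)" for x
  have h_meas: "h \<in> borel_measurable (PiM I (\<lambda>_. lborel))"
    unfolding h_def by measurable
  have "(\<integral>\<^sup>+x. f x \<partial>PiM (insert i I) (\<lambda>_. lborel)) =
      (\<integral>\<^sup>+x. (\<integral>\<^sup>+y. f (x(i := y)) \<partial>lborel) \<partial>PiM I (\<lambda>_. lborel))"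
    using insert by (intro product_nn_integral_insert) auto
  also have "\<dots> = (\<integral>\<^sup>+x. ennreal c * h x \<partial>PiM I (\<lambda>_. lborel))"
  proof (rule nn_integral_cong)
    fix x assume "x \<in> space (PiM I (\<lambda>_. lborel::real measure))"
    then have f_x: "(\<lambda>y. f (x(i := y))) \<in> borel_measurable borel"
      using measurable_comp[OF measurable_component_update[OF _ insert(2)] insert.prems]
      by (simp add: comp_def)
    show "(\<integral>\<^sup>+y. f (x(i := y)) \<partial>lborel) = ennreal c * h x"
      using nn_integral_real_affine[OF f_x, of c 0] \<open>c > 0\<close> by (simp add: h_def)
  qed
  also have "\<dots> = ennreal c *
      (ennreal (c ^ card I) * (\<integral>\<^sup>+x. h (\<lambda>j\<in>I. c * x j) \<partial>PiM I (\<lambda>_. lborel)))"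
    unfolding nn_integral_cmult[OF h_meas] insert.IH[OF h_meas] ..
  also have "(\<integral>\<^sup>+x. h (\<lambda>j\<in>I. c * x j) \<partial>PiM I (\<lambda>_. lborel)) =
     (\<integral>\<^sup>+x. f (\<lambda>j\<in>insert i I. c * x j) \<partial>PiM (insert i I) (\<lambda>_. lborel))"
  proof -
    have shift: "(\<lambda>j\<in>insert i I. c * (x(i := y)) j) = (\<lambda>j\<in>I. c * x j)(i := c * y)" for x y
      using insert.hyps by (auto simp: fun_eq_iff)
    have f_c: "(\<lambda>x. f (\<lambda>j\<in>insert i I. c * x j)) \<in> borel_measurable (PiM (insert i I) (\<lambda>_. lborel))"
      by measurable
    show ?thesis
      by (subst product_nn_integral_insert[OF insert.hyps f_c]) (simp only: shift h_def)
  qed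
  also have "ennreal c * (ennreal (c ^ card I) * X) = ennreal (c ^ card (insert i I)) * X" for X
    using insert.hyps \<open>c > 0\<close> by (simp add: ennreal_mult mult.assoc)
  finally show ?case .
qed

lemma inverse_ennreal_power:
  "(D::real) > 0 \<Longrightarrow> inverse (ennreal D) ^ n = ennreal (1 / D ^ n)"
  by (simp add: inverse_ennreal ennreal_power power_one_over inverse_eq_divide)

lemma inverse_ennreal_mult:
  "0 \<le> u \<Longrightarrow> 0 \<le> v \<Longrightarrow> inverse (ennreal u) * inverse (ennreal v) = inverse (ennreal (u * v))"
  by (simp add: ennreal_mult ennreal_inverse_mult)

lemma inverse_ennreal_antimono:
  "(D::real) \<le> D' \<Longrightarrow> inverse (ennreal D') \<le> inverse (ennreal D)"
proof (cases "D > 0")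
  case False
  then have "ennreal D = 0" by (simp add: ennreal_eq_0_iff)
  then show ?thesis by simp
qed (simp add: inverse_ennreal ennreal_leI le_imp_inverse_le)

lemma segment_comb_pos:
  fixes A B y :: real
  assumes "0 < A" "0 < B" "y \<in> {0..1}"
  shows "0 < (1-y)*A + y*B"
  using assms by (cases "y < 1") (auto intro: add_pos_nonneg)

lemma segment_power_antiderivative:
  fixes A B y :: real and k :: nat
  assumes den: "(1-y)*A + y*B \<noteq> 0" and B: "B \<noteq> 0"
  shows "((\<lambda>z. - (((1-z) / ((1-z)*A + z*B)) ^ (k+1)) / ((k+1)*B)) has_real_derivative
           (1-y)^k / ((1-y)*A + y*B)^(k+2)) (at y)"
proof -
  define D where "D = (1-y)*A + y*B"
  define r where "r z = (1-z) / ((1-z)*A + z*B)" for z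
  have "(r has_real_derivative ((-1) * D - (1-y) * (B - A)) / (D * D)) (at y)"
    unfolding r_def D_def using den by (auto intro!: derivative_eq_intros)
  also have "((-1) * D - (1-y) * (B - A)) / (D * D) = - B / D^2"
    by (simp add: D_def power2_eq_square algebra_simps)
  finally have r': "(r has_real_derivative - B / D^2) (at y)" .
  have "((\<lambda>z. r z ^ (k+1)) has_real_derivative real (k+1) * r y ^ k * (- B / D^2)) (at y)"
    using DERIV_power[OF r', of "k+1"] by (simp add: mult_ac)
  from DERIV_cdivide[OF DERIV_minus[OF this], of "(k+1)*B"]
  have "((\<lambda>z. - (r z ^ (k+1)) / ((k+1)*B)) has_real_derivative
      - (real (k+1) * r y ^ k * (- B / D^2)) / ((k+1)*B)) (at y)" .
  also have "- (real (k+1) * r y ^ k * (- B / D^2)) / ((k+1)*B) = (1-y)^k / D^(k+2)"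
    using B by (simp add: r_def D_def[symmetric] power_divide power_add power2_eq_square)
  finally show ?thesis unfolding D_def r_def .
qed

lemma nn_integral_segment_power_real:
  fixes A B :: real and k :: nat
  assumes A: "A > 0" and B: "B > 0"
  shows "(\<integral>\<^sup>+y. ennreal ((1-y)^k / ((1-y)*A + y*B)^(k+2)) * indicator {0..1} y \<partial>lborel)
     = ennreal (1 / ((k+1)*B) * (1 / A) ^ (k+1))"
proof -
  define F where "F z = - (((1-z) / ((1-z)*A + z*B)) ^ (k+1)) / ((k+1)*B)" for z
  have "(\<integral>\<^sup>+y. ennreal ((1-y)^k / ((1-y)*A + y*B)^(k+2)) * indicator {0..1} y \<partial>lborel)
      = ennreal (F 1 - F 0)"
  proof (rule nn_integral_FTC_Icc)
    fix y :: real assume y: "y \<in> {0..1}"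
    show "(F has_real_derivative (1-y)^k / ((1-y)*A + y*B)^(k+2)) (at y)"
      unfolding F_def using segment_comb_pos[OF A B y] B
      by (intro segment_power_antiderivative) auto
    show "0 \<le> (1-y)^k / ((1-y)*A + y*B)^(k+2)"
      using segment_comb_pos[OF A B y] y by simp
  qed auto
  also have "F 1 - F 0 = 1 / ((k+1)*B) * (1 / A) ^ (k+1)"
    using A B by (simp add: F_def)
  finally show ?thesis .
qed

lemma nn_integral_segment_power:
  fixes A B :: real and k :: nat
  assumes A: "A > 0" and B: "B > 0"
  shows "(\<integral>\<^sup>+y. indicator {0..<1} y * ennreal ((1-y)^k) * inverse (ennreal ((1-y)*A + y*B)) ^ (k+2) \<partial>lborel)
     = inverse (ennreal ((k+1)*B)) * inverse (ennreal A) ^ (k+1)"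
proof -
  have "AE y in lborel. indicator {0..<1} y * ennreal ((1-y)^k) * inverse (ennreal ((1-y)*A + y*B)) ^ (k+2)
      = ennreal ((1-y)^k / ((1-y)*A + y*B)^(k+2)) * indicator {0..1} y"
    using AE_lborel_singleton[of 1]
  proof eventually_elim
    case (elim y)
    show ?case
    proof (cases "y \<in> {0..<1}")
      case True
      then have "inverse (ennreal ((1-y)*A + y*B)) ^ (k+2) = ennreal (1 / ((1-y)*A + y*B) ^ (k+2))"
        using segment_comb_pos[OF A B] by (intro inverse_ennreal_power) auto
      moreover have "ennreal ((1-y)^k) * ennreal (1 / ((1-y)*A + y*B) ^ (k+2)) =
          ennreal ((1-y)^k / ((1-y)*A + y*B)^(k+2))"
        using True segment_comb_pos[OF A B, of y] by (subst ennreal_mult[symmetric]) auto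
      ultimately show ?thesis
        using True by (simp only: indicator_simps atLeastLessThan_iff atLeastAtMost_iff) simp
    qed (use elim in \<open>auto simp: indicator_def\<close>)
  qed
  then have "(\<integral>\<^sup>+y. indicator {0..<1} y * ennreal ((1-y)^k) * inverse (ennreal ((1-y)*A + y*B)) ^ (k+2) \<partial>lborel)
      = ennreal (1 / ((k+1)*B) * (1 / A) ^ (k+1))"
    using nn_integral_segment_power_real[OF A B] by (subst nn_integral_cong_AE) auto
  also have "\<dots> = ennreal (1 / ((k+1)*B)) * ennreal (1 / A ^ (k+1))"
    using A B by (subst ennreal_mult[symmetric]) (auto simp: power_one_over)
  also have "\<dots> = inverse (ennreal ((k+1)*B)) * inverse (ennreal A) ^ (k+1)"
  proof -
    have "0 < real (k+1) * B" using B by simp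
    then show ?thesis by (simp only: inverse_ennreal_power[OF A] inverse_ennreal inverse_eq_divide)
  qed
  finally show ?thesis .
qed

text \<open>\<open>corner_simplex n\<close> is the chart domain of \<open>H_param (Suc n)\<close>, with vertex \<open>n\<close> of the
  simplex at the origin; \<open>barycentric_comb n a\<close> is the affine function taking the value \<open>a l\<close>
  at vertex \<open>l\<close>.\<close>

definition corner_simplex :: "nat \<Rightarrow> (nat \<Rightarrow> real) set" where
  "corner_simplex n = {t. (\<forall>l\<in>{..<n}. 0 \<le> t l) \<and> (\<Sum>l<n. t l) \<le> 1}"

definition barycentric_comb :: "nat \<Rightarrow> (nat \<Rightarrow> real) \<Rightarrow> (nat \<Rightarrow> real) \<Rightarrow> real" where
  "barycentric_comb n a t = a n * (1 - (\<Sum>l<n. t l)) + (\<Sum>l<n. t l * a l)"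

definition feynman_integrand :: "nat \<Rightarrow> (nat \<Rightarrow> real) \<Rightarrow> (nat \<Rightarrow> real) \<Rightarrow> ennreal" where
  "feynman_integrand n a t =
     indicator (corner_simplex n) t * inverse (ennreal (barycentric_comb n a t)) ^ Suc n"

lemma corner_simplex_sets[measurable]:
  "corner_simplex n \<inter> space (lborel_pi n) \<in> sets (lborel_pi n)"
proof -
  have "corner_simplex n \<inter> space (lborel_pi n) =
      Pi\<^sub>E {..<n} (\<lambda>_. {0..}) \<inter> (\<lambda>x. \<Sum>l<n. x l) -` {..1} \<inter> space (lborel_pi n)"
    by (auto simp: corner_simplex_def space_PiM)
  also have "\<dots> \<in> sets (lborel_pi n)"
    by measurable
  finally show ?thesis .
qed

lemma borel_measurable_indicator_corner_simplex[measurable]: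
  "indicator (corner_simplex n) \<in> borel_measurable (lborel_pi n)"
  by (rule borel_measurable_indicator') (use corner_simplex_sets in \<open>simp add: Int_def conj_commute\<close>)

lemma borel_measurable_feynman_integrand[measurable]:
  "feynman_integrand n a \<in> borel_measurable (lborel_pi n)"
  unfolding feynman_integrand_def barycentric_comb_def by measurable

lemma barycentric_comb_nonneg:
  assumes "\<forall>l\<le>n. 0 \<le> a l" and "t \<in> corner_simplex n"
  shows "0 \<le> barycentric_comb n a t"
  using assms unfolding barycentric_comb_def corner_simplex_def
  by (intro add_nonneg_nonneg mult_nonneg_nonneg sum_nonneg) auto

lemma barycentric_comb_add_const:
  "barycentric_comb n (\<lambda>l. a l + e) t = barycentric_comb n a t + e"
  by (simp add: barycentric_comb_def algebra_simps sum.distrib sum_distrib_left)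

lemma barycentric_comb_pos:
  assumes "\<forall>l\<le>n. 0 < a l" and "t \<in> corner_simplex n"
  shows "0 < barycentric_comb n a t"
proof -
  define \<mu> where "\<mu> = Min (a ` {..n})"
  have "0 < \<mu>" and "\<forall>l\<le>n. 0 \<le> a l - \<mu>"
    using assms(1) by (auto simp: \<mu>_def)
  then show ?thesis
    using barycentric_comb_nonneg[of n "\<lambda>l. a l - \<mu>", OF _ assms(2)]
      barycentric_comb_add_const[of n "\<lambda>l. a l - \<mu>" \<mu> t] by simp
qed

lemma corner_simplex_Suc_slice_range:
  "x(k := y) \<in> corner_simplex (Suc k) \<Longrightarrow> y \<in> {0..1}"
  using emeasure_std_simplex_aux_step[of k "{..<k}" x y 1]
  by (simp add: corner_simplex_def lessThan_Suc)

lemma scaled_slice_in_corner_simplex_iff: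
  assumes "0 \<le> y" "y < 1"
  shows "(\<lambda>i\<in>{..<k}. (1-y) * \<phi> i)(k := y) \<in> corner_simplex (Suc k) \<longleftrightarrow> \<phi> \<in> corner_simplex k"
proof -
  have "(1-y) * (\<Sum>l<k. \<phi> l) + y \<le> 1 \<longleftrightarrow> (\<Sum>l<k. \<phi> l) \<le> 1"
    using assms by (smt (verit) mult_le_cancel_left1 mult_cancel_left1)
  then show ?thesis
    using assms by (auto simp: corner_simplex_def sum_distrib_left zero_le_mult_iff)
qed

lemma barycentric_comb_scaled_slice:
  "barycentric_comb (Suc k) a ((\<lambda>i\<in>{..<k}. (1-y) * \<phi> i)(k := y)) =
     (1-y) * barycentric_comb k (a(k := a (Suc k))) \<phi> + y * a k"
  by (simp add: barycentric_comb_def sum_distrib_left algebra_simps)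

lemma nn_integral_feynman_integrand_slice:
  assumes "0 \<le> y" "y < 1"
  shows "(\<integral>\<^sup>+x. feynman_integrand (Suc k) a (x(k := y)) \<partial>lborel_pi k) =
    ennreal ((1-y)^k) * (\<integral>\<^sup>+\<phi>. indicator (corner_simplex k) \<phi> *
      inverse (ennreal ((1-y) * barycentric_comb k (a(k := a (Suc k))) \<phi> + y * a k)) ^ (k+2) \<partial>lborel_pi k)"
proof -
  have "(\<lambda>x. x(k := y)) \<in> measurable (lborel_pi k) (lborel_pi (Suc k))"
    unfolding lessThan_Suc by measurable
  then have "(\<lambda>x. feynman_integrand (Suc k) a (x(k := y))) \<in> borel_measurable (lborel_pi k)"
    by measurable
  from nn_integral_PiM_lborel_scale[OF finite_lessThan _ this, of "1-y"] assms
  have "(\<integral>\<^sup>+x. feynman_integrand (Suc k) a (x(k := y)) \<partial>lborel_pi k) = ennreal ((1-y)^k) *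
      (\<integral>\<^sup>+\<phi>. feynman_integrand (Suc k) a ((\<lambda>i\<in>{..<k}. (1-y) * \<phi> i)(k := y)) \<partial>lborel_pi k)"
    unfolding card_lessThan by simp
  also have "(\<integral>\<^sup>+\<phi>. feynman_integrand (Suc k) a ((\<lambda>i\<in>{..<k}. (1-y) * \<phi> i)(k := y)) \<partial>lborel_pi k) =
      (\<integral>\<^sup>+\<phi>. indicator (corner_simplex k) \<phi> *
        inverse (ennreal ((1-y) * barycentric_comb k (a(k := a (Suc k))) \<phi> + y * a k)) ^ (k+2) \<partial>lborel_pi k)"
    using assms by (intro nn_integral_cong)
      (simp add: feynman_integrand_def indicator_def scaled_slice_in_corner_simplex_iff
        barycentric_comb_scaled_slice del: fun_upd_apply restrict_upd)
  finally show ?thesis .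
qed

lemma nn_integral_feynman_integrand_Suc:
  "(\<integral>\<^sup>+t. feynman_integrand (Suc k) a t \<partial>lborel_pi (Suc k)) =
    (\<integral>\<^sup>+\<phi>. (\<integral>\<^sup>+y. indicator {0..<1} y * ennreal ((1-y)^k) * (indicator (corner_simplex k) \<phi> *
       inverse (ennreal ((1-y) * barycentric_comb k (a(k := a (Suc k))) \<phi> + y * a k)) ^ (k+2)) \<partial>lborel)
     \<partial>lborel_pi k)"
proof -
  interpret product_sigma_finite "\<lambda>_. lborel::real measure" by standard
  interpret Mk: sigma_finite_measure "lborel_pi k" by (rule sigma_finite) auto
  interpret pair_sigma_finite lborel "lborel_pi k" by standard
  define H where "H y \<phi> = indicator (corner_simplex k) \<phi> *
      inverse (ennreal ((1-y) * barycentric_comb k (a(k := a (Suc k))) \<phi> + y * a k)) ^ (k+2)" for y \<phi>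
  have H_meas: "H y \<in> borel_measurable (lborel_pi k)" for y
    unfolding H_def barycentric_comb_def by measurable
  have [measurable]: "(\<lambda>(y, \<phi>). indicator {0..<1} y * ennreal ((1-y)^k) * H y \<phi>)
      \<in> borel_measurable (lborel \<Otimes>\<^sub>M lborel_pi k)"
    unfolding H_def barycentric_comb_def by measurable
  have "(\<integral>\<^sup>+t. feynman_integrand (Suc k) a t \<partial>lborel_pi (Suc k)) =
      (\<integral>\<^sup>+y. (\<integral>\<^sup>+x. feynman_integrand (Suc k) a (x(k := y)) \<partial>lborel_pi k) \<partial>lborel)"
    unfolding lessThan_Suc
    by (rule product_nn_integral_insert_rev) (auto simp: lessThan_Suc[symmetric])
  also have "\<dots> =
      (\<integral>\<^sup>+y. (\<integral>\<^sup>+\<phi>. indicator {0..<1} y * ennreal ((1-y)^k) * H y \<phi> \<partial>lborel_pi k) \<partial>lborel)"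
  proof (rule nn_integral_cong_AE)
    show "AE y in lborel. (\<integral>\<^sup>+x. feynman_integrand (Suc k) a (x(k := y)) \<partial>lborel_pi k) =
        (\<integral>\<^sup>+\<phi>. indicator {0..<1} y * ennreal ((1-y)^k) * H y \<phi> \<partial>lborel_pi k)"
      using AE_lborel_singleton[of 1]
    proof eventually_elim
      case (elim y)
      show ?case
      proof (cases "y \<in> {0..<1}")
        case True
        then have "(\<integral>\<^sup>+\<phi>. indicator {0..<1} y * ennreal ((1-y)^k) * H y \<phi> \<partial>lborel_pi k) =
            ennreal ((1-y)^k) * (\<integral>\<^sup>+\<phi>. H y \<phi> \<partial>lborel_pi k)"
          by (simp add: nn_integral_cmult[OF H_meas])
        also have "\<dots> = (\<integral>\<^sup>+x. feynman_integrand (Suc k) a (x(k := y)) \<partial>lborel_pi k)"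
          using True unfolding H_def by (intro nn_integral_feynman_integrand_slice[symmetric]) auto
        finally show ?thesis by (rule sym)
      next
        case False
        with elim have "feynman_integrand (Suc k) a (x(k := y)) = 0" for x
          using corner_simplex_Suc_slice_range[of x k y] by (auto simp: feynman_integrand_def indicator_def)
        with False show ?thesis by simp
      qed
    qed
  qed
  also have "\<dots> =
      (\<integral>\<^sup>+\<phi>. (\<integral>\<^sup>+y. indicator {0..<1} y * ennreal ((1-y)^k) * H y \<phi> \<partial>lborel) \<partial>lborel_pi k)"
    by (rule Fubini'[symmetric]) measurable
  finally show ?thesis
    unfolding H_def .
qed

lemma nn_integral_feynman_integrand_pos:
  "(\<forall>l\<le>n. 0 < a l) \<Longrightarrow>
    (\<integral>\<^sup>+t. feynman_integrand n a t \<partial>lborel_pi n) = inverse (ennreal (fact n * (\<Prod>l\<le>n. a l)))"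
proof (induction n arbitrary: a)
  case 0
  then show ?case
    by (simp add: PiM_empty nn_integral_count_space_finite feynman_integrand_def
        corner_simplex_def barycentric_comb_def)
next
  case (Suc k a)
  define a' where "a' = a(k := a (Suc k))"
  have a'_pos: "\<forall>l\<le>k. 0 < a' l" using Suc.prems by (auto simp: a'_def)
  have "(\<integral>\<^sup>+t. feynman_integrand (Suc k) a t \<partial>lborel_pi (Suc k)) =
      (\<integral>\<^sup>+\<phi>. inverse (ennreal ((k+1) * a k)) * feynman_integrand k a' \<phi> \<partial>lborel_pi k)"
    unfolding nn_integral_feynman_integrand_Suc a'_def[symmetric]
  proof (rule nn_integral_cong)
    fix \<phi> :: "nat \<Rightarrow> real"
    show "(\<integral>\<^sup>+y. indicator {0..<1} y * ennreal ((1-y)^k) * (indicator (corner_simplex k) \<phi> *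
        inverse (ennreal ((1-y) * barycentric_comb k a' \<phi> + y * a k)) ^ (k+2)) \<partial>lborel) =
      inverse (ennreal ((k+1) * a k)) * feynman_integrand k a' \<phi>"
    proof (cases "\<phi> \<in> corner_simplex k")
      case True
      with a'_pos have "0 < barycentric_comb k a' \<phi>"
        by (rule barycentric_comb_pos)
      with True Suc.prems show ?thesis
        using nn_integral_segment_power[of "barycentric_comb k a' \<phi>" "a k" k]
        by (simp add: feynman_integrand_def)
    qed (simp add: feynman_integrand_def)
  qed
  also have "\<dots> = inverse (ennreal ((k+1) * a k)) * inverse (ennreal (fact k * (\<Prod>l\<le>k. a' l)))"
    using Suc.IH[OF a'_pos] by (simp add: nn_integral_cmult)
  also have "\<dots> = inverse (ennreal ((k+1) * a k * (fact k * (\<Prod>l\<le>k. a' l))))"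
  proof (rule inverse_ennreal_mult)
    show "0 \<le> real (k+1) * a k" using Suc.prems by (simp add: less_imp_le)
    show "0 \<le> fact k * (\<Prod>l\<le>k. a' l)"
      using a'_pos by (intro mult_nonneg_nonneg prod_nonneg) (auto simp: less_imp_le)
  qed
  also have "(k+1) * a k * (fact k * (\<Prod>l\<le>k. a' l)) = fact (Suc k) * (\<Prod>l\<le>Suc k. a l)"
    by (simp add: a'_def atMost_Suc lessThan_Suc_atMost[symmetric] lessThan_Suc prod.insert_if mult_ac)
  finally show ?case .
qed

lemma nn_integral_feynman_integrand:
  assumes "\<forall>l\<le>n. 0 \<le> a l"
  shows "(\<integral>\<^sup>+t. feynman_integrand n a t \<partial>lborel_pi n) = inverse (ennreal (fact n * (\<Prod>l\<le>n. a l)))"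
proof (cases "\<forall>l\<le>n. 0 < a l")
  case True
  then show ?thesis by (rule nn_integral_feynman_integrand_pos)
next
  case False
  with assms have prod_0: "(\<Prod>l\<le>n. a l) = 0"
    by (metis atMost_iff finite_atMost order_less_le prod_zero_iff)
  define I where "I = (\<integral>\<^sup>+t. feynman_integrand n a t \<partial>lborel_pi n)"
  have lower: "inverse (ennreal (fact n * (\<Prod>l\<le>n. a l + e))) \<le> I" if "e > 0" for e
  proof -
    have "inverse (ennreal (fact n * (\<Prod>l\<le>n. a l + e))) =
        (\<integral>\<^sup>+t. feynman_integrand n (\<lambda>l. a l + e) t \<partial>lborel_pi n)"
      using assms that by (intro nn_integral_feynman_integrand_pos[symmetric]) (auto intro: add_nonneg_pos)
    also have "\<dots> \<le> I"
      unfolding I_def feynman_integrand_def barycentric_comb_add_const using that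
      by (intro nn_integral_mono mult_left_mono power_mono inverse_ennreal_antimono) auto
    finally show ?thesis .
  qed
  have "((\<lambda>e. ennreal (fact n * (\<Prod>l\<le>n. a l + e))) \<longlongrightarrow> ennreal (fact n * (\<Prod>l\<le>n. a l + 0)))
      (at_right 0)"
    by (intro tendsto_intros)
  moreover have "ennreal (fact n * (\<Prod>l\<le>n. a l + 0)) = 0"
    by (simp add: prod_0)
  ultimately have "((\<lambda>e. ennreal (fact n * (\<Prod>l\<le>n. a l + e))) \<longlongrightarrow> 0) (at_right 0)"
    by (simp only:)
  then have "((\<lambda>e. inverse (ennreal (fact n * (\<Prod>l\<le>n. a l + e)))) \<longlongrightarrow> inverse 0) (at_right 0)"
    by (rule continuous_on_tendsto_compose[OF continuous_on_inverse_ennreal[OF continuous_on_id],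
        where s = UNIV]) auto
  then have "inverse 0 \<le> I"
    using lower eventually_at_right_less[of 0]
    by (intro tendsto_le[OF trivial_limit_at_right_real tendsto_const]) (auto elim: eventually_mono)
  then show ?thesis
    by (simp add: I_def prod_0 top_unique)
qed

lemma H_param_eq_corner_simplex:
  "H_param (Suc n) = corner_simplex n \<inter> space (lborel_pi n)"
  by (auto simp: H_param_def corner_simplex_def space_PiM)

lemma emeasure_H_param:
  "emeasure (lborel_pi n) (H_param (Suc n)) = ennreal (1 / fact n)"
  using emeasure_std_simplex_aux[of "{..<n}" 1]
  by (simp add: H_param_eq_corner_simplex corner_simplex_def)

lemma measurable_theta_of:
  "theta_of (Suc n) \<in> measurable (lborel_pi n) (lborel_pi (Suc n))"
proof -
  have "theta_of (Suc n) = (\<lambda>t. \<lambda>l\<in>{..<Suc n}. if l < n then t l else 1 - (\<Sum>k<n. t k))"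
    by (auto simp: theta_of_def fun_eq_iff)
  also have "\<dots> \<in> measurable (lborel_pi n) (lborel_pi (Suc n))"
  proof (rule measurable_restrict)
    fix l
    show "(\<lambda>t. if l < n then t l else 1 - (\<Sum>k<n. t k)) \<in> measurable (lborel_pi n) lborel"
      by (cases "l < n") simp_all
  qed
  finally show ?thesis .
qed

lemma nn_integral_H_uniform:
  assumes f: "f \<in> borel_measurable (lborel_pi (Suc n))"
  shows "(\<integral>\<^sup>+\<theta>. f \<theta> \<partial>H_uniform (Suc n)) = ennreal (fact n) *
    (\<integral>\<^sup>+t. f (theta_of (Suc n) t) * indicator (corner_simplex n) t \<partial>lborel_pi n)"
proof -
  have H_sets: "H_param (Suc n) \<in> sets (lborel_pi n)"
    by (simp add: H_param_eq_corner_simplex)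
  have f_theta: "(\<lambda>t. f (theta_of (Suc n) t)) \<in> borel_measurable (lborel_pi n)"
    using measurable_comp[OF measurable_theta_of f] by (simp add: comp_def)
  have "(\<integral>\<^sup>+\<theta>. f \<theta> \<partial>H_uniform (Suc n)) =
      (\<integral>\<^sup>+t. f (theta_of (Suc n) t) \<partial>uniform_measure (lborel_pi n) (H_param (Suc n)))"
    unfolding H_uniform_def diff_Suc_1
    by (rule nn_integral_distr) (use measurable_theta_of f in \<open>simp_all cong: measurable_cong_sets\<close>)
  also have "\<dots> = (\<integral>\<^sup>+t. f (theta_of (Suc n) t) * indicator (H_param (Suc n)) t \<partial>lborel_pi n) /
      ennreal (1 / fact n)"
    unfolding emeasure_H_param[symmetric] by (rule nn_integral_uniform_measure[OF f_theta H_sets])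
  also have "(\<integral>\<^sup>+t. f (theta_of (Suc n) t) * indicator (H_param (Suc n)) t \<partial>lborel_pi n) =
      (\<integral>\<^sup>+t. f (theta_of (Suc n) t) * indicator (corner_simplex n) t \<partial>lborel_pi n)"
    by (intro nn_integral_cong) (simp add: H_param_eq_corner_simplex indicator_def)
  finally show ?thesis
    by (simp add: divide_ennreal_def inverse_ennreal mult.commute)
qed

lemma f_crit_term_eq_inverse_power:
  assumes "0 \<le> D"
  shows "(if D = 0 then \<infinity> else ennreal ((1 / D) powr real (Suc n))) = inverse (ennreal D) ^ Suc n"
proof (cases "D = 0")
  case False
  with assms have "D > 0" by simp
  then have "(1 / D) powr real (Suc n) = 1 / D ^ Suc n"
    using powr_realpow[of "1 / D" "Suc n"] by (simp add: power_one_over)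
  with \<open>D > 0\<close> False show ?thesis
    by (simp only: if_False inverse_ennreal_power)
qed simp

lemma f_crit_theta_of:
  assumes "t \<in> corner_simplex n"
  shows "f_crit (Suc n) N (2 * real (Suc n)) X (theta_of (Suc n) t) =
    (\<Sum>i<N. \<Sum>j\<in>{i+1..<N}. inverse (ennreal (barycentric_comb n (\<lambda>l. (X i l - X j l)^2) t)) ^ Suc n)"
proof -
  have "(\<Sum>l<Suc n. theta_of (Suc n) t l * (X i l - X j l)^2) = barycentric_comb n (\<lambda>l. (X i l - X j l)^2) t"
    for i j by (simp add: theta_of_def barycentric_comb_def mult.commute)
  moreover have "0 \<le> barycentric_comb n (\<lambda>l. (X i l - X j l)^2) t" for i j
    using assms by (intro barycentric_comb_nonneg) auto
  moreover have "2 * real (Suc n) / 2 = real (Suc n)"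
    by simp
  ultimately show ?thesis
    unfolding f_crit_def Let_def by (simp only: f_crit_term_eq_inverse_power)
qed

lemma fact_mult_inverse_ennreal_fact_mult:
  "0 \<le> (P::real) \<Longrightarrow>
    ennreal (fact n) * inverse (ennreal (fact n * P)) = (if P = 0 then \<infinity> else ennreal (1 / P))"
  by (auto simp: inverse_ennreal ennreal_mult[symmetric] ennreal_mult_top field_simps)

lemma nn_integral_f_crit_H_uniform:
  "(\<integral>\<^sup>+\<theta>. f_crit (Suc n) N (2 * real (Suc n)) X \<theta> \<partial>H_uniform (Suc n)) =
    (\<Sum>i<N. \<Sum>j\<in>{i+1..<N}.
      (let P = (\<Prod>l<Suc n. (X i l - X j l)^2) in if P = 0 then (\<infinity>::ennreal) else ennreal (1 / P)))"
proof -
  define a where "a i j = (\<lambda>l. (X i l - X j l)^2)" for i j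
  have "f_crit (Suc n) N (2 * real (Suc n)) X \<in> borel_measurable (lborel_pi (Suc n))"
    unfolding f_crit_def Let_def by measurable
  then have "(\<integral>\<^sup>+\<theta>. f_crit (Suc n) N (2 * real (Suc n)) X \<theta> \<partial>H_uniform (Suc n)) = ennreal (fact n) *
      (\<integral>\<^sup>+t. f_crit (Suc n) N (2 * real (Suc n)) X (theta_of (Suc n) t) * indicator (corner_simplex n) t
        \<partial>lborel_pi n)"
    by (rule nn_integral_H_uniform)
  also have "(\<integral>\<^sup>+t. f_crit (Suc n) N (2 * real (Suc n)) X (theta_of (Suc n) t) * indicator (corner_simplex n) t
        \<partial>lborel_pi n) =
      (\<integral>\<^sup>+t. (\<Sum>i<N. \<Sum>j\<in>{i+1..<N}. feynman_integrand n (a i j) t) \<partial>lborel_pi n)"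
    using f_crit_theta_of[of _ n N X]
    by (intro nn_integral_cong) (simp add: a_def feynman_integrand_def indicator_def)
  also have "\<dots> = (\<Sum>i<N. \<Sum>j\<in>{i+1..<N}. inverse (ennreal (fact n * (\<Prod>l\<le>n. a i j l))))"
    by (simp add: nn_integral_sum nn_integral_feynman_integrand a_def)
  also have "ennreal (fact n) * \<dots> = (\<Sum>i<N. \<Sum>j\<in>{i+1..<N}.
      (let P = (\<Prod>l<Suc n. (X i l - X j l)^2) in if P = 0 then (\<infinity>::ennreal) else ennreal (1 / P)))"
    unfolding sum_distrib_left Let_def lessThan_Suc_atMost a_def
    by (intro sum.cong refl fact_mult_inverse_ennreal_fact_mult prod_nonneg) auto
  finally show ?thesis .
qed

theorem theorem1:
  fixes m N :: nat
  assumes "m \<ge> 2" and "N \<ge> 2"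
  shows "\<exists>C::real. \<forall>X :: nat \<Rightarrow> nat \<Rightarrow> real. (\<forall>i<N. X i \<in> S_b m) \<longrightarrow>
     (\<integral>\<^sup>+ \<theta>. f_crit m N (2 * real m) X \<theta> \<partial>H_uniform m) =
     ennreal C * (\<Sum>i<N. \<Sum>j\<in>{i+1..<N}.
        (let P = (\<Prod>l<m. (X i l - X j l)^2) in if P = 0 then (\<infinity>::ennreal) else ennreal (1 / P)))"
proof -
  obtain n where m: "m = Suc n"
    using assms(1) by (cases m) auto
  show ?thesis
    unfolding m
    by (intro exI[of _ 1] allI impI) (simp only: nn_integral_f_crit_H_uniform ennreal_1 mult_1)
qed

end
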